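(* An $\omega$-automatic preorder $\preceq\subseteq\Sigma^\omega\times\Sigma^\omega$ is $\omega$-recognizable if and only if its induced equivalence relation $\sim$ (defined by $x\sim y$ iff $x\preceq y$ and $y\preceq x$) has finite index.
   Context: A relation on $\Sigma^\omega$ is $\omega$-automatic if accepted by a deterministic parity automaton over $\Sigma\times\Sigma$ reading both words synchronously. It is $\omega$-recognizable if it equals $\bigcup_{i=1}^{\ell}X_i\times Y_i$ for some $\omega$-regular languages $X_i,Y_i\subseteq\Sigma^\omega$. A preorder is a reflexive and transitive relation. *)

theory Defs
  imports Main
begin

text \<open>Infinite words over an alphabet 'a are functions nat \<Rightarrow> 'a.
  The finite alphabet is modelled by a type of class finite.\<close>

definition omega_regular :: "(nat \<Rightarrow> 'a) set \<Rightarrow> bool" where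
  "omega_regular L \<longleftrightarrow>
     (\<exists>(Q::nat set) I Delta F. finite Q \<and> I \<subseteq> Q \<and> F \<subseteq> Q \<and>
        Delta \<subseteq> Q \<times> UNIV \<times> Q \<and>
        L = {w. \<exists>r. r 0 \<in> I \<and> (\<forall>n. (r n, w n, r (Suc n)) \<in> Delta) \<and>
                    (\<exists>\<^sub>\<infinity>n. r n \<in> F)})"

primrec dpa_run :: "nat \<Rightarrow> (nat \<Rightarrow> 'b \<Rightarrow> nat) \<Rightarrow> (nat \<Rightarrow> 'b) \<Rightarrow> nat \<Rightarrow> nat" where
  "dpa_run q0 delta w 0 = q0"
| "dpa_run q0 delta w (Suc n) = delta (dpa_run q0 delta w n) (w n)"

definition dpa_accepts :: "nat \<Rightarrow> (nat \<Rightarrow> 'b \<Rightarrow> nat) \<Rightarrow> (nat \<Rightarrow> nat) \<Rightarrow> (nat \<Rightarrow> 'b) \<Rightarrow> bool" where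
  "dpa_accepts q0 delta col w \<longleftrightarrow>
     even (LEAST k. \<exists>\<^sub>\<infinity>n. col (dpa_run q0 delta w n) = k)"

definition omega_automatic :: "((nat \<Rightarrow> 'a) \<times> (nat \<Rightarrow> 'a)) set \<Rightarrow> bool" where
  "omega_automatic R \<longleftrightarrow>
     (\<exists>(Q::nat set) q0 (delta :: nat \<Rightarrow> 'a \<times> 'a \<Rightarrow> nat) col.
        finite Q \<and> q0 \<in> Q \<and> (\<forall>q\<in>Q. \<forall>c. delta q c \<in> Q) \<and>
        (\<forall>x y. (x, y) \<in> R \<longleftrightarrow> dpa_accepts q0 delta col (\<lambda>n. (x n, y n))))"

definition omega_recognizable :: "((nat \<Rightarrow> 'a) \<times> (nat \<Rightarrow> 'a)) set \<Rightarrow> bool" where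
  "omega_recognizable R \<longleftrightarrow>
     (\<exists>(l::nat) X Y. (\<forall>i\<in>{1..l}. omega_regular (X i) \<and> omega_regular (Y i)) \<and>
        R = (\<Union>i\<in>{1..l}. X i \<times> Y i))"

definition induced_equiv :: "('w \<times> 'w) set \<Rightarrow> ('w \<times> 'w) set" where
  "induced_equiv R = {(x, y). (x, y) \<in> R \<and> (y, x) \<in> R}"

end

theory Submission
  imports Defs "HOL-Library.Omega_Words_Fun" "HOL-Library.Nat_Bijection" "HOL-Library.FuncSet"
begin

(* If R is a finite union of rectangles X_i \<times> Y_i, two words lying in the same sets X_i and Y_i
   are equivalent, so there are finitely many classes.

   Conversely, fix one representative per class. Running the parity automaton of R on all pairs
   of representatives at once and pumping this finite product of runs yields i < j such that
   replacing each representative z by the ultimately periodic word z[0..i) z[i..j)^\<omega> changes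
   none of the R-relations among representatives. The new representatives are then pairwise
   inequivalent, hence meet every class, and R is the union, over these words u, of
   {y. (y, u) \<in> R} \<times> {w. (u, w) \<in> R}. Such a section at an ultimately periodic u is
   \<omega>-regular: a deterministic parity automaton reading the other track can follow the
   position in the lasso of u, and parity automata are converted to Buchi automata. *)

section \<open>Limit sets\<close>

lemma limit_comp_finite_range:
  assumes "finite (range w)"
  shows "limit (f \<circ> w) = f ` limit w"
proof
  obtain k where k: "limit w = range (suffix k w)"
    using limit_is_suffix[OF assms] by blast
  have "limit (f \<circ> w) \<subseteq> range (suffix k (f \<circ> w))"
    by (rule limit_in_range_suffix)
  also have "\<dots> = f ` limit w"
    unfolding k by (auto simp: suffix_def)
  finally show "limit (f \<circ> w) \<subseteq> f ` limit w" .
qed auto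

lemma ex_loop_covering_limit:
  fixes S :: "nat \<Rightarrow> 's"
  assumes "finite (range S)"
  obtains i j where "i < j" "S i = S j" "limit S = S ` {i..<j}"
proof -
  obtain k where "limit S = range (suffix k S)"
    using limit_is_suffix[OF assms] by blast
  moreover have "range (suffix k S) = S ` {k..}"
    unfolding suffix_def using le_Suc_ex by (auto simp: image_iff) blast
  ultimately have k: "limit S = S ` {k..}" by simp
  have "finite (limit S)"
    using finite_subset[OF limit_in_range assms] .
  then obtain C where C: "C \<subseteq> {k..}" "finite C" "limit S = S ` C"
    using finite_subset_image[of "limit S" S "{k..}"] k by blast
  obtain M where M: "C \<subseteq> {..<M}"
    using finite_nat_bounded[OF \<open>finite C\<close>] by blast
  have "S k \<in> limit S" unfolding k by simp
  then obtain j where j: "j > max k M" "S j = S k"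
    unfolding limit_iff_frequent INFM_nat by blast
  have "limit S = S ` {k..<j}"
  proof
    have "C \<subseteq> {k..<j}" using C(1) M j(1) by (auto simp: subset_iff)
    then show "limit S \<subseteq> S ` {k..<j}" using C(3) by (simp add: image_mono)
    show "S ` {k..<j} \<subseteq> limit S" unfolding k by auto
  qed
  with j show thesis by (intro that[of k j]) auto
qed

lemma ex_common_loop_covering_limit:
  fixes S :: "'p \<Rightarrow> nat \<Rightarrow> 's"
  assumes "finite P" and "\<And>p. p \<in> P \<Longrightarrow> finite (range (S p))"
  obtains i j where "i < j" "\<And>p. p \<in> P \<Longrightarrow> S p i = S p j \<and> limit (S p) = S p ` {i..<j}"
proof -
  define T where "T t = restrict (\<lambda>p. S p t) P" for t
  have "range T \<subseteq> (\<Pi>\<^sub>E p\<in>P. range (S p))"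
    by (auto simp: T_def)
  then have "finite (range T)"
    by (rule finite_subset) (intro finite_PiE, use assms in auto)
  then obtain i j where ij: "i < j" "T i = T j" "limit T = T ` {i..<j}"
    by (rule ex_loop_covering_limit)
  have "S p i = S p j \<and> limit (S p) = S p ` {i..<j}" if "p \<in> P" for p
  proof
    have S_p: "S p = (\<lambda>f. f p) \<circ> T"
      using that by (auto simp: T_def)
    show "S p i = S p j" using ij(2) unfolding S_p by simp
    show "limit (S p) = S p ` {i..<j}"
      unfolding S_p limit_comp_finite_range[OF \<open>finite (range T)\<close>] ij(3) image_comp ..
  qed
  with ij(1) show thesis by (rule that)
qed

section \<open>Lassos\<close>

text \<open>\<open>w \<circ> lasso i j\<close> is the ultimately periodic word \<open>w[0..i) w[i..j)\<^sup>\<omega>\<close>.\<close>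

definition lasso :: "nat \<Rightarrow> nat \<Rightarrow> nat \<Rightarrow> nat" where
  "lasso i j t = (if t < i then t else i + (t - i) mod (j - i))"

lemma lasso_less:
  assumes "i < j"
  shows "lasso i j t < j"
proof (cases "t < i")
  case False
  have "(t - i) mod (j - i) < j - i" using assms by simp
  with False show ?thesis by (simp add: lasso_def)
qed (use assms in \<open>simp add: lasso_def\<close>)

lemma lasso_0: "i < j \<Longrightarrow> lasso i j 0 = 0"
  unfolding lasso_def by auto

lemma lasso_Suc:
  assumes "i < j"
  shows "lasso i j (Suc t) = (if Suc (lasso i j t) < j then Suc (lasso i j t) else i)"
proof (cases "t < i")
  case False
  then have "Suc t - i = Suc (t - i)" by auto
  moreover have "(t - i) mod (j - i) < j - i" using assms by auto
  then have "Suc ((t - i) mod (j - i)) \<noteq> j - i \<Longrightarrow> Suc (i + (t - i) mod (j - i)) < j" by linarith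
  ultimately show ?thesis using False assms unfolding lasso_def
    by (auto simp: mod_Suc)
qed (use assms in \<open>auto simp: lasso_def\<close>)

lemma lasso_ge: "i \<le> t \<Longrightarrow> i \<le> lasso i j t"
  by (simp add: lasso_def)

lemma lasso_loop:
  assumes "i \<le> m" "m < j"
  shows "lasso i j (m + n * (j - i)) = m"
proof -
  have "m + n * (j - i) - i = (m - i) + n * (j - i)" using assms(1) by simp
  then have "(m + n * (j - i) - i) mod (j - i) = ((m - i) + n * (j - i)) mod (j - i)"
    by (rule arg_cong)
  also have "\<dots> = (m - i) mod (j - i)" by (rule mod_mult_self1)
  also have "\<dots> = m - i" using assms by (intro mod_less) linarith
  finally show ?thesis using assms(1) by (simp add: lasso_def)
qed

lemma lasso_frequent:
  assumes "i \<le> m" "m < j"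
  shows "\<exists>\<^sub>\<infinity>t. lasso i j t = m"
  unfolding INFM_nat_le
proof
  fix n
  have "n * 1 \<le> n * (j - i)" using assms by (intro mult_le_mono2) simp
  then have "n \<le> m + n * (j - i)" by linarith
  with lasso_loop[OF assms] show "\<exists>t\<ge>n. lasso i j t = m" by blast
qed

lemma limit_lasso:
  assumes "i < j"
  shows "limit (lasso i j) = {i..<j}"
proof
  have "lasso i j ` {i..} \<subseteq> {i..<j}"
    using lasso_ge lasso_less[OF assms] by auto
  then show "limit (lasso i j) \<subseteq> {i..<j}"
    using limit_subset[of "lasso i j" i] by blast
  show "{i..<j} \<subseteq> limit (lasso i j)"
    using lasso_frequent by (auto simp: limit_iff_frequent)
qed

lemma limit_comp_lasso:
  assumes "i < j"
  shows "limit (f \<circ> lasso i j) = f ` {i..<j}"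
proof -
  have "range (lasso i j) \<subseteq> {..<j}" using lasso_less[OF assms] by auto
  then have "finite (range (lasso i j))" by (rule finite_subset) simp
  then have "limit (f \<circ> lasso i j) = f ` limit (lasso i j)" by (rule limit_comp_finite_range)
  then show ?thesis using limit_lasso[OF assms] by simp
qed

section \<open>Pumping runs of parity automata\<close>

lemma dpa_run_in_states:
  assumes "q0 \<in> Q" "\<forall>q\<in>Q. \<forall>c. delta q c \<in> Q"
  shows "dpa_run q0 delta w t \<in> Q"
  using assms by (induction t) auto

lemma dpa_run_lasso:
  assumes "i < j" "dpa_run q0 delta w i = dpa_run q0 delta w j"
  shows "dpa_run q0 delta (w \<circ> lasso i j) = dpa_run q0 delta w \<circ> lasso i j"
proof
  fix t show "dpa_run q0 delta (w \<circ> lasso i j) t = (dpa_run q0 delta w \<circ> lasso i j) t"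
  proof (induction t)
    case 0
    then show ?case using lasso_0[OF assms(1)] by simp
  next
    case (Suc t)
    then have "dpa_run q0 delta (w \<circ> lasso i j) (Suc t) = dpa_run q0 delta w (Suc (lasso i j t))"
      by (simp add: comp_def)
    also have "\<dots> = dpa_run q0 delta w (lasso i j (Suc t))"
    proof (cases "Suc (lasso i j t) < j")
      case False
      then have "Suc (lasso i j t) = j" using lasso_less[OF assms(1), of t] by simp
      then show ?thesis using assms(2) False by (simp add: lasso_Suc[OF assms(1)] del: dpa_run.simps)
    qed (simp add: lasso_Suc[OF assms(1)])
    finally show ?case by (simp add: comp_def)
  qed
qed

lemma dpa_accepts_iff_limit:
  "dpa_accepts q0 delta col w \<longleftrightarrow> even (LEAST k. k \<in> limit (col \<circ> dpa_run q0 delta w))"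
  by (simp add: dpa_accepts_def limit_iff_frequent)

lemma dpa_accepts_lasso_iff:
  assumes "i < j" and "finite (range (dpa_run q0 delta w))"
    and "dpa_run q0 delta w i = dpa_run q0 delta w j"
    and "limit (dpa_run q0 delta w) = dpa_run q0 delta w ` {i..<j}"
  shows "dpa_accepts q0 delta col (w \<circ> lasso i j) \<longleftrightarrow> dpa_accepts q0 delta col w"
proof -
  have "limit (col \<circ> dpa_run q0 delta (w \<circ> lasso i j)) = (col \<circ> dpa_run q0 delta w) ` {i..<j}"
    unfolding dpa_run_lasso[OF assms(1,3)] o_assoc by (rule limit_comp_lasso[OF assms(1)])
  also have "\<dots> = limit (col \<circ> dpa_run q0 delta w)"
    unfolding limit_comp_finite_range[OF assms(2)] assms(4) image_comp ..
  finally show ?thesis unfolding dpa_accepts_iff_limit by simp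
qed

lemma omega_automatic_pumping:
  assumes "omega_automatic R" and "finite Z"
  obtains i j where "i < j"
    "\<And>z z'. z \<in> Z \<Longrightarrow> z' \<in> Z \<Longrightarrow> (z \<circ> lasso i j, z' \<circ> lasso i j) \<in> R \<longleftrightarrow> (z, z') \<in> R"
proof -
  obtain Q q0 delta col where Q: "finite Q" "q0 \<in> Q" "\<forall>q\<in>Q. \<forall>c. delta q c \<in> Q"
    and R: "\<And>x y. (x, y) \<in> R \<longleftrightarrow> dpa_accepts q0 delta col (\<lambda>n. (x n, y n))"
    using assms(1) unfolding omega_automatic_def by blast
  define S where "S p = dpa_run q0 delta (\<lambda>n. (fst p n, snd p n))" for p
  have fin: "finite (range (S p))" for p
  proof -
    have "range (S p) \<subseteq> Q" using dpa_run_in_states[OF Q(2,3)] by (auto simp: S_def)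
    then show ?thesis using Q(1) by (rule finite_subset)
  qed
  obtain i j where "i < j"
    and ij: "\<And>p. p \<in> Z \<times> Z \<Longrightarrow> S p i = S p j \<and> limit (S p) = S p ` {i..<j}"
    using ex_common_loop_covering_limit[of "Z \<times> Z" S] assms(2) fin by blast
  have "(z \<circ> lasso i j, z' \<circ> lasso i j) \<in> R \<longleftrightarrow> (z, z') \<in> R" if "z \<in> Z" "z' \<in> Z" for z z'
  proof -
    let ?w = "\<lambda>n. (z n, z' n)"
    have w: "S (z, z') = dpa_run q0 delta ?w"
      by (simp add: S_def)
    have "dpa_accepts q0 delta col (?w \<circ> lasso i j) \<longleftrightarrow> dpa_accepts q0 delta col ?w"
      using fin[of "(z, z')"] ij[of "(z, z')"] that unfolding w
      by (intro dpa_accepts_lasso_iff[OF \<open>i < j\<close>]) auto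
    moreover have "(\<lambda>n. ((z \<circ> lasso i j) n, (z' \<circ> lasso i j) n)) = ?w \<circ> lasso i j"
      by auto
    ultimately show ?thesis unfolding R by simp
  qed
  with \<open>i < j\<close> show thesis by (rule that)
qed

section \<open>From parity to Buchi automata\<close>

definition buchi_language :: "'s set \<Rightarrow> ('s \<times> 'a \<times> 's) set \<Rightarrow> 's set \<Rightarrow> (nat \<Rightarrow> 'a) set" where
  "buchi_language I Delta F =
     {w. \<exists>r. r 0 \<in> I \<and> (\<forall>n. (r n, w n, r (Suc n)) \<in> Delta) \<and> (\<exists>\<^sub>\<infinity>n. r n \<in> F)}"

lemma buchi_language_rename:
  assumes f: "inj_on f Q" and "I \<subseteq> Q" "F \<subseteq> Q" and Delta: "Delta \<subseteq> Q \<times> UNIV \<times> Q"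
  shows "buchi_language (f ` I) ((\<lambda>(p, a, q). (f p, a, f q)) ` Delta) (f ` F) = buchi_language I Delta F"
    (is "buchi_language _ ?Delta _ = _")
proof (intro set_eqI iffI)
  fix w assume "w \<in> buchi_language I Delta F"
  then obtain r where "r 0 \<in> I" "\<And>n. (r n, w n, r (Suc n)) \<in> Delta" "\<exists>\<^sub>\<infinity>n. r n \<in> F"
    unfolding buchi_language_def by blast
  then have "(f \<circ> r) 0 \<in> f ` I" "\<And>n. ((f \<circ> r) n, w n, (f \<circ> r) (Suc n)) \<in> ?Delta"
    "\<exists>\<^sub>\<infinity>n. (f \<circ> r) n \<in> f ` F"
    by (force elim: INFM_mono)+
  then show "w \<in> buchi_language (f ` I) ?Delta (f ` F)"
    unfolding buchi_language_def by blast
next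
  fix w assume "w \<in> buchi_language (f ` I) ?Delta (f ` F)"
  then obtain r' where r': "r' 0 \<in> f ` I" "\<And>n. (r' n, w n, r' (Suc n)) \<in> ?Delta"
    "\<exists>\<^sub>\<infinity>n. r' n \<in> f ` F"
    unfolding buchi_language_def by blast
  define r where "r n = inv_into Q f (r' n)" for n
  have "r' n \<in> f ` Q" for n
    using r'(2)[of n] Delta by auto
  then have r_Q: "r n \<in> Q" and f_r: "f (r n) = r' n" for n
    unfolding r_def by (auto intro: inv_into_into f_inv_into_f)
  have r_unique: "x = r n" if "x \<in> Q" "f x = r' n" for x n
    using f r_Q f_r that by (metis inj_onD)
  have "(r n, w n, r (Suc n)) \<in> Delta" for n
  proof -
    obtain p q where "(p, w n, q) \<in> Delta" "f p = r' n" "f q = r' (Suc n)"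
      using r'(2)[of n] by auto
    moreover have "p \<in> Q" "q \<in> Q" using Delta calculation(1) by auto
    ultimately show ?thesis using r_unique by metis
  qed
  moreover have "r 0 \<in> I" using r'(1) r_unique \<open>I \<subseteq> Q\<close> by auto
  moreover have "\<exists>\<^sub>\<infinity>n. r n \<in> F" using r'(3) by (rule INFM_mono) (use r_unique \<open>F \<subseteq> Q\<close> in auto)
  ultimately show "w \<in> buchi_language I Delta F"
    unfolding buchi_language_def by blast
qed

lemma omega_regular_buchi_language:
  fixes Delta :: "('s \<times> 'a \<times> 's) set"
  assumes "finite Q" "I \<subseteq> Q" "F \<subseteq> Q" "Delta \<subseteq> Q \<times> UNIV \<times> Q"
  shows "omega_regular (buchi_language I Delta F)"
proof -
  obtain f where "bij_betw f Q {0..<card Q}"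
    using ex_bij_betw_finite_nat[OF assms(1)] by blast
  then have f: "inj_on f Q" "finite (f ` Q)"
    by (auto simp: bij_betw_def)
  let ?Delta = "(\<lambda>(p, a, q). (f p, a, f q)) ` Delta"
  have "f ` I \<subseteq> f ` Q" "f ` F \<subseteq> f ` Q" "?Delta \<subseteq> f ` Q \<times> UNIV \<times> f ` Q"
    using assms(2-4) by auto
  with f show ?thesis
    unfolding omega_regular_def buchi_language_rename[OF f(1) assms(2-4), symmetric]
    by (auto simp: buchi_language_def)
qed

lemma parity_condition_iff:
  fixes \<rho> :: "nat \<Rightarrow> nat"
  assumes "finite (range \<rho>)"
  shows "even (LEAST k. \<exists>\<^sub>\<infinity>n. \<rho> n = k) \<longleftrightarrow> (\<exists>k. even k \<and> (\<exists>\<^sub>\<infinity>n. \<rho> n = k) \<and> (\<forall>\<^sub>\<infinity>n. k \<le> \<rho> n))"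
proof
  define k where "k = (LEAST k. \<exists>\<^sub>\<infinity>n. \<rho> n = k)"
  have "\<exists>k. \<exists>\<^sub>\<infinity>n. \<rho> n = k"
    using limit_nonempty[OF assms] by (simp add: limit_iff_frequent)
  then have k: "\<exists>\<^sub>\<infinity>n. \<rho> n = k"
    unfolding k_def by (rule LeastI_ex)
  have "\<forall>\<^sub>\<infinity>n. \<forall>k'\<in>{..<k}. \<rho> n \<noteq> k'"
    using not_less_Least[where P = "\<lambda>k. \<exists>\<^sub>\<infinity>n. \<rho> n = k"]
    by (intro eventually_ball_finite) (auto simp: k_def)
  then have "\<forall>\<^sub>\<infinity>n. k \<le> \<rho> n"
    by (rule eventually_mono) (use not_le in blast)
  moreover assume "even (LEAST k. \<exists>\<^sub>\<infinity>n. \<rho> n = k)"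
  ultimately show "\<exists>k. even k \<and> (\<exists>\<^sub>\<infinity>n. \<rho> n = k) \<and> (\<forall>\<^sub>\<infinity>n. k \<le> \<rho> n)"
    using k unfolding k_def by blast
next
  assume "\<exists>k. even k \<and> (\<exists>\<^sub>\<infinity>n. \<rho> n = k) \<and> (\<forall>\<^sub>\<infinity>n. k \<le> \<rho> n)"
  then obtain k where k: "even k" "\<exists>\<^sub>\<infinity>n. \<rho> n = k" "\<forall>\<^sub>\<infinity>n. k \<le> \<rho> n"
    by blast
  have "k \<le> k'" if "\<exists>\<^sub>\<infinity>n. \<rho> n = k'" for k'
    using INFM_conjI[OF that k(3)] by (auto dest: INFM_EX)
  then have "(LEAST k. \<exists>\<^sub>\<infinity>n. \<rho> n = k) = k"
    using k(2) by (intro Least_equality)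
  with k(1) show "even (LEAST k. \<exists>\<^sub>\<infinity>n. \<rho> n = k)" by simp
qed

text \<open>The Buchi automaton simulates the parity automaton in its first component. At some
  point it guesses an even priority \<open>k\<close> (the second component changes from \<open>None\<close>
  to \<open>Some k\<close>) and from then on only allows priorities \<open>\<ge> k\<close>; it accepts whenever
  it sees \<open>k\<close>.\<close>

definition buchi_of_dpa_trans ::
  "nat set \<Rightarrow> (nat \<Rightarrow> 'b \<Rightarrow> nat) \<Rightarrow> (nat \<Rightarrow> nat) \<Rightarrow> ((nat \<times> nat option) \<times> 'b \<times> (nat \<times> nat option)) set"
  where "buchi_of_dpa_trans Q delta col =
    {((q, None), a, (delta q a, None)) | q a. q \<in> Q} \<union>
    {((q, m), a, (delta q a, Some k)) | q a m k.
       q \<in> Q \<and> m \<in> {None, Some k} \<and> k \<in> col ` Q \<and> even k \<and> k \<le> col (delta q a)}"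

definition buchi_of_dpa_final :: "nat set \<Rightarrow> (nat \<Rightarrow> nat) \<Rightarrow> (nat \<times> nat option) set" where
  "buchi_of_dpa_final Q col = (\<lambda>q. (q, Some (col q))) ` Q"

lemma in_buchi_of_dpa_language:
  assumes Q: "q0 \<in> Q" "\<forall>q\<in>Q. \<forall>c. delta q c \<in> Q"
    and k: "even k" "\<exists>\<^sub>\<infinity>n. col (dpa_run q0 delta w n) = k" "\<forall>\<^sub>\<infinity>n. k \<le> col (dpa_run q0 delta w n)"
  shows "w \<in> buchi_language {(q0, None)} (buchi_of_dpa_trans Q delta col) (buchi_of_dpa_final Q col)"
proof -
  let ?run = "dpa_run q0 delta w"
  obtain N where N: "\<And>n. N \<le> n \<Longrightarrow> k \<le> col (?run n)"
    using k(3) unfolding MOST_nat_le by blast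
  have "k \<in> col ` Q"
    using INFM_EX[OF k(2)] dpa_run_in_states[OF Q] by blast
  define r where "r n = (?run n, if n \<le> N then None else Some k)" for n
  have "(r n, w n, r (Suc n)) \<in> buchi_of_dpa_trans Q delta col" for n
    using N[of "Suc n"] dpa_run_in_states[OF Q] k(1) \<open>k \<in> col ` Q\<close>
    by (auto simp: r_def buchi_of_dpa_trans_def)
  moreover have "\<exists>\<^sub>\<infinity>n. r n \<in> buchi_of_dpa_final Q col"
    using INFM_conjI[OF k(2) MOST_ge_nat[of "Suc N"]]
    by (rule INFM_mono) (auto simp: r_def buchi_of_dpa_final_def dpa_run_in_states[OF Q])
  moreover have "r 0 = (q0, None)"
    by (simp add: r_def)
  ultimately show ?thesis
    unfolding buchi_language_def by blast
qed

lemma buchi_of_dpa_languageE: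
  assumes "w \<in> buchi_language {(q0, None)} (buchi_of_dpa_trans Q delta col) (buchi_of_dpa_final Q col)"
  obtains k where "even k" "\<exists>\<^sub>\<infinity>n. col (dpa_run q0 delta w n) = k"
    "\<forall>\<^sub>\<infinity>n. k \<le> col (dpa_run q0 delta w n)"
proof -
  let ?run = "dpa_run q0 delta w"
  obtain r where r: "r 0 = (q0, None)" "\<And>n. (r n, w n, r (Suc n)) \<in> buchi_of_dpa_trans Q delta col"
    "\<exists>\<^sub>\<infinity>n. r n \<in> buchi_of_dpa_final Q col"
    using assms unfolding buchi_language_def by blast
  have step: "fst (r (Suc n)) = delta (fst (r n)) (w n)"
    "snd (r n) = Some k \<Longrightarrow> snd (r (Suc n)) = Some k \<and> even k \<and> k \<le> col (fst (r (Suc n)))"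
    for n k
    using r(2)[of n] by (auto simp: buchi_of_dpa_trans_def)
  have run: "fst (r n) = ?run n" for n
    by (induction n) (simp_all add: r(1) step(1))
  obtain n1 where "r n1 \<in> buchi_of_dpa_final Q col"
    using INFM_EX[OF r(3)] by blast
  then obtain k where k: "snd (r n1) = Some k"
    by (auto simp: buchi_of_dpa_final_def)
  have stay: "snd (r n) = Some k" if "n1 \<le> n" for n
    using that by (induction rule: dec_induct) (use k step(2) in auto)
  have "\<forall>\<^sub>\<infinity>n. k \<le> col (?run n)"
    unfolding MOST_nat_le
  proof (intro exI allI impI)
    fix n assume "Suc n1 \<le> n"
    then obtain m where "n = Suc m" "n1 \<le> m" by (auto dest: Suc_le_D)
    then show "k \<le> col (?run n)" using step(2)[OF stay] run by metis
  qed
  moreover have "col (?run n) = k" if "r n \<in> buchi_of_dpa_final Q col" "n1 \<le> n" for n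
  proof -
    from that(1) obtain q where "r n = (q, Some (col q))"
      by (auto simp: buchi_of_dpa_final_def)
    with stay[OF that(2)] run[of n] show ?thesis by simp
  qed
  then have "\<exists>\<^sub>\<infinity>n. col (?run n) = k"
    using INFM_conjI[OF r(3) MOST_ge_nat[of n1]] by (elim INFM_mono) blast
  moreover have "even k"
    using step(2)[OF k] by simp
  ultimately show thesis by (intro that)
qed

lemma omega_regular_dpa_language:
  assumes Q: "finite Q" "q0 \<in> Q" "\<forall>q\<in>Q. \<forall>c. delta q c \<in> Q"
  shows "omega_regular {w. dpa_accepts q0 delta col w}"
proof -
  have parity: "dpa_accepts q0 delta col w \<longleftrightarrow>
    (\<exists>k. even k \<and> (\<exists>\<^sub>\<infinity>n. col (dpa_run q0 delta w n) = k) \<and> (\<forall>\<^sub>\<infinity>n. k \<le> col (dpa_run q0 delta w n)))"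
    for w
  proof -
    have "range (col \<circ> dpa_run q0 delta w) \<subseteq> col ` Q"
      using dpa_run_in_states[OF Q(2,3)] by auto
    then have "finite (range (col \<circ> dpa_run q0 delta w))"
      by (rule finite_subset) (use Q(1) in simp)
    from parity_condition_iff[OF this] show ?thesis
      by (simp add: dpa_accepts_def)
  qed
  have "{w. dpa_accepts q0 delta col w} =
    buchi_language {(q0, None)} (buchi_of_dpa_trans Q delta col) (buchi_of_dpa_final Q col)"
    (is "?A = ?B")
  proof (intro set_eqI iffI)
    fix w assume "w \<in> ?A"
    then show "w \<in> ?B" unfolding parity using in_buchi_of_dpa_language[OF Q(2,3)] by blast
  next
    fix w assume "w \<in> ?B"
    then show "w \<in> ?A" unfolding parity by (elim buchi_of_dpa_languageE) blast
  qed
  also have "omega_regular \<dots>"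
  proof (rule omega_regular_buchi_language)
    let ?Q = "Q \<times> insert None (Some ` col ` Q)"
    show "finite ?Q" using Q(1) by simp
    show "{(q0, None)} \<subseteq> ?Q" using Q(2) by simp
    show "buchi_of_dpa_final Q col \<subseteq> ?Q" by (auto simp: buchi_of_dpa_final_def)
    show "buchi_of_dpa_trans Q delta col \<subseteq> ?Q \<times> UNIV \<times> ?Q"
      using Q(3) by (auto simp: buchi_of_dpa_trans_def)
  qed
  finally show ?thesis .
qed

section \<open>Sections at lassos\<close>

text \<open>A pair (state, lasso position) is coded as one natural number, because DPA states are
  natural numbers.\<close>

lemma omega_regular_dpa_lasso_section:
  assumes "i < j" and Q: "finite Q" "q0 \<in> Q" "\<forall>q\<in>Q. \<forall>c. delta q c \<in> Q"
  shows "omega_regular {y. dpa_accepts q0 delta col (\<lambda>n. h (u (lasso i j n)) (y n))}"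
proof -
  define delta' where "delta' s a =
    (case prod_decode s of (q, p) \<Rightarrow> prod_encode (delta q (h (u p) a), if Suc p < j then Suc p else i))"
    for s a
  define col' where "col' s = col (fst (prod_decode s))" for s
  have run: "dpa_run (prod_encode (q0, 0)) delta' y t =
    prod_encode (dpa_run q0 delta (\<lambda>n. h (u (lasso i j n)) (y n)) t, lasso i j t)" for y t
    by (induction t) (simp_all add: delta'_def lasso_0 lasso_Suc \<open>i < j\<close>)
  have "{y. dpa_accepts q0 delta col (\<lambda>n. h (u (lasso i j n)) (y n))} =
    {y. dpa_accepts (prod_encode (q0, 0)) delta' col' y}"
    by (simp add: dpa_accepts_def col'_def run)
  also have "omega_regular \<dots>"
  proof (rule omega_regular_dpa_language)
    let ?Q = "prod_encode ` (Q \<times> {..<j})"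
    show "finite ?Q" using Q(1) by simp
    show "prod_encode (q0, 0) \<in> ?Q" using Q(2) \<open>i < j\<close> by simp
    show "\<forall>s\<in>?Q. \<forall>c. delta' s c \<in> ?Q" using Q(3) \<open>i < j\<close> by (auto simp: delta'_def)
  qed
  finally show ?thesis .
qed

lemma omega_automatic_lasso_sections:
  assumes "omega_automatic R" and "i < j"
  shows "omega_regular {y. (y, u \<circ> lasso i j) \<in> R}" "omega_regular {y. (u \<circ> lasso i j, y) \<in> R}"
proof -
  obtain Q q0 delta col where Q: "finite Q" "q0 \<in> Q" "\<forall>q\<in>Q. \<forall>c. delta q c \<in> Q"
    and R: "\<And>x y. (x, y) \<in> R \<longleftrightarrow> dpa_accepts q0 delta col (\<lambda>n. (x n, y n))"
    using assms(1) unfolding omega_automatic_def by blast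
  show "omega_regular {y. (y, u \<circ> lasso i j) \<in> R}"
    using omega_regular_dpa_lasso_section[OF assms(2) Q, where h = "\<lambda>a b. (b, a)"] by (simp add: R)
  show "omega_regular {y. (u \<circ> lasso i j, y) \<in> R}"
    using omega_regular_dpa_lasso_section[OF assms(2) Q, where h = Pair] by (simp add: R)
qed

section \<open>Preorders of finite index\<close>

lemma equiv_induced_equiv:
  assumes "refl R" "trans R"
  shows "equiv UNIV (induced_equiv R)"
  using assms unfolding induced_equiv_def
  by (intro equivI refl_onI symI transI) (auto dest: refl_onD elim: transE)

lemma finite_quotient_if_signature_finite:
  assumes E: "equiv UNIV E" and "finite (range \<phi>)" and sig: "\<And>x y. \<phi> x = \<phi> y \<Longrightarrow> (x, y) \<in> E"
  shows "finite (UNIV // E)"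
proof -
  have "E `` {x} = E `` (\<phi> -` {\<phi> x})" for x
  proof
    show "E `` {x} \<subseteq> E `` (\<phi> -` {\<phi> x})" by auto
    show "E `` (\<phi> -` {\<phi> x}) \<subseteq> E `` {x}"
      using sig equiv_class_eq[OF E] by blast
  qed
  then have "UNIV // E \<subseteq> (\<lambda>v. E `` (\<phi> -` {v})) ` range \<phi>"
    by (auto elim!: quotientE)
  then show ?thesis
    by (rule finite_subset) (use \<open>finite (range \<phi>)\<close> in simp)
qed

lemma finite_index_if_omega_recognizable:
  assumes "refl R" "trans R" and "omega_recognizable R"
  shows "finite (UNIV // induced_equiv R)"
proof -
  obtain l :: nat and X Y where R: "R = (\<Union>i\<in>{1..l}. X i \<times> Y i)"
    using assms(3) unfolding omega_recognizable_def by blast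
  define \<phi> where "\<phi> x = ({i\<in>{1..l}. x \<in> X i}, {i\<in>{1..l}. x \<in> Y i})" for x
  have "(x, y) \<in> R" if "\<phi> x = \<phi> y" for x y
  proof -
    obtain i where "i \<in> {1..l}" "y \<in> X i" "y \<in> Y i"
      using refl_onD[OF assms(1), of y] R by blast
    with that show ?thesis unfolding R \<phi>_def by blast
  qed
  then have "\<phi> x = \<phi> y \<Longrightarrow> (x, y) \<in> induced_equiv R" for x y
    unfolding induced_equiv_def by auto
  moreover have "finite (range \<phi>)"
    by (rule finite_subset[of _ "Pow {1..l} \<times> Pow {1..l}"]) (auto simp: \<phi>_def)
  ultimately show ?thesis
    using finite_quotient_if_signature_finite equiv_induced_equiv[OF assms(1,2)] by blast
qed

text \<open>Choosing one element of \<open>Z\<close> in each class, \<open>g\<close> induces an injective, hence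
  surjective, map on the finite quotient.\<close>

lemma reflecting_image_meets_every_class:
  assumes E: "equiv UNIV E" and "finite (UNIV // E)"
    and Z: "\<And>y. \<exists>z\<in>Z. (y, z) \<in> E"
    and g: "\<And>z z'. z \<in> Z \<Longrightarrow> z' \<in> Z \<Longrightarrow> (g z, g z') \<in> E \<Longrightarrow> (z, z') \<in> E"
  shows "\<exists>z\<in>Z. (y, g z) \<in> E"
proof -
  define rep where "rep C = (SOME z. z \<in> Z \<and> z \<in> C)" for C
  have rep: "rep C \<in> Z" "C = E `` {rep C}" if C_class: "C \<in> UNIV // E" for C
  proof -
    obtain x where C: "C = E `` {x}" using C_class unfolding quotient_def by blast
    then have "\<exists>z. z \<in> Z \<and> z \<in> C" using Z by auto
    then have "rep C \<in> Z \<and> rep C \<in> C" unfolding rep_def by (rule someI_ex)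
    then have "(x, rep C) \<in> E" using C by simp
    then show "C = E `` {rep C}" unfolding C by (rule equiv_class_eq[OF E])
    show "rep C \<in> Z" using \<open>rep C \<in> Z \<and> rep C \<in> C\<close> ..
  qed
  define G where "G C = E `` {g (rep C)}" for C
  have "inj_on G (UNIV // E)"
  proof (rule inj_onI)
    fix C D assume CD: "C \<in> UNIV // E" "D \<in> UNIV // E" and "G C = G D"
    then have "(g (rep C), g (rep D)) \<in> E"
      unfolding G_def using eq_equiv_class_iff[OF E UNIV_I UNIV_I] by blast
    then have "(rep C, rep D) \<in> E" using g rep(1) CD by blast
    then have "E `` {rep C} = E `` {rep D}" by (rule equiv_class_eq[OF E])
    then show "C = D" using rep(2)[OF CD(1)] rep(2)[OF CD(2)] by simp
  qed
  moreover have "G ` (UNIV // E) \<subseteq> UNIV // E"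
    by (auto simp: G_def intro: quotientI)
  ultimately have "G ` (UNIV // E) = UNIV // E"
    using endo_inj_surj \<open>finite (UNIV // E)\<close> by blast
  moreover have "E `` {y} \<in> UNIV // E" by (rule quotientI) simp
  ultimately obtain C where C: "C \<in> UNIV // E" "E `` {y} = G C"
    by (metis imageE)
  then have "(y, g (rep C)) \<in> E"
    using eq_equiv_class_iff[OF E UNIV_I UNIV_I] by (simp add: G_def)
  with rep(1)[OF C(1)] show ?thesis ..
qed

lemma preorder_eq_UN_sections:
  assumes "trans R" and P: "\<And>y. \<exists>p\<in>P. (y, p) \<in> R \<and> (p, y) \<in> R"
  shows "R = (\<Union>p\<in>P. {y. (y, p) \<in> R} \<times> {w. (p, w) \<in> R})"
  using P transD[OF assms(1)] by fast

lemma omega_recognizable_UN: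
  assumes "finite P" and "\<And>p. p \<in> P \<Longrightarrow> omega_regular (X p) \<and> omega_regular (Y p)"
  shows "omega_recognizable (\<Union>p\<in>P. X p \<times> Y p)"
proof -
  obtain e where "bij_betw e {1..card P} P"
    using ex_bij_betw_nat_finite_1[OF assms(1)] by blast
  then have e: "e ` {1..card P} = P" by (simp add: bij_betw_def)
  show ?thesis
    unfolding omega_recognizable_def
  proof (intro exI conjI ballI)
    have "(\<Union>i\<in>{1..card P}. (X \<circ> e) i \<times> (Y \<circ> e) i) = (\<Union>p\<in>e ` {1..card P}. X p \<times> Y p)"
      by simp
    then show "(\<Union>p\<in>P. X p \<times> Y p) = (\<Union>i\<in>{1..card P}. (X \<circ> e) i \<times> (Y \<circ> e) i)"
      by (simp only: e)
    fix i assume "i \<in> {1..card P}"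
    then have "e i \<in> P" using e by blast
    then show "omega_regular ((X \<circ> e) i)" "omega_regular ((Y \<circ> e) i)"
      using assms(2) by auto
  qed
qed

lemma omega_recognizable_if_finite_index:
  assumes "omega_automatic R" "refl R" "trans R" and fin: "finite (UNIV // induced_equiv R)"
  shows "omega_recognizable R"
proof -
  let ?E = "induced_equiv R"
  have E: "equiv UNIV ?E" using assms(2,3) by (rule equiv_induced_equiv)
  define Z where "Z = (\<lambda>C. SOME z. z \<in> C) ` (UNIV // ?E)"
  have "finite Z" using fin by (simp add: Z_def)
  have Z: "\<exists>z\<in>Z. (y, z) \<in> ?E" for y
  proof -
    have "y \<in> ?E `` {y}"
      using refl_onD[OF assms(2)] by (simp add: induced_equiv_def)
    then have "(SOME z. z \<in> ?E `` {y}) \<in> ?E `` {y}" by (rule someI[of "\<lambda>z. z \<in> ?E `` {y}"])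
    moreover have "?E `` {y} \<in> UNIV // ?E" by (rule quotientI) simp
    ultimately show ?thesis unfolding Z_def by blast
  qed
  obtain i j where "i < j"
    and lasso: "\<And>z z'. z \<in> Z \<Longrightarrow> z' \<in> Z \<Longrightarrow> (z \<circ> lasso i j, z' \<circ> lasso i j) \<in> R \<longleftrightarrow> (z, z') \<in> R"
    using omega_automatic_pumping[OF assms(1) \<open>finite Z\<close>] by blast
  define g where "g z = z \<circ> lasso i j" for z :: "nat \<Rightarrow> 'a"
  have "(z, z') \<in> ?E" if "z \<in> Z" "z' \<in> Z" "(g z, g z') \<in> ?E" for z z'
    using lasso[OF that(1,2)] lasso[OF that(2,1)] that(3) unfolding g_def induced_equiv_def by blast
  then have "\<exists>z\<in>Z. (y, g z) \<in> ?E" for y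
    by (rule reflecting_image_meets_every_class[OF E fin Z])
  then have "R = (\<Union>p\<in>g ` Z. {y. (y, p) \<in> R} \<times> {w. (p, w) \<in> R})"
    by (intro preorder_eq_UN_sections[OF assms(3)]) (auto simp: induced_equiv_def)
  also have "omega_recognizable \<dots>"
    using omega_automatic_lasso_sections[OF assms(1) \<open>i < j\<close>] \<open>finite Z\<close>
    by (intro omega_recognizable_UN) (auto simp: g_def)
  finally show ?thesis .
qed

theorem proposition10:
  fixes R :: "((nat \<Rightarrow> 'a::finite) \<times> (nat \<Rightarrow> 'a)) set"
  assumes "omega_automatic R"
    and "refl R" and "trans R"
  shows "omega_recognizable R \<longleftrightarrow> finite (UNIV // induced_equiv R)"
  using finite_index_if_omega_recognizable omega_recognizable_if_finite_index assms by blast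

end
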